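(* Let $E/\mathbb{Q}$ be given by the model $y^2=x^3+Ax+B$ ($A,B\in\mathbb{Z}$) described in the context and $X=\max\{|A|^3,|B|^2\}$. Let $P,Q\in E(\mathbb{Q})$ satisfy $|x(P)|,|x(Q)|\le 2X^{1/6}$ and $x(P)=x_1/s$, $x(Q)=x_2/s$ with $x_1,x_2\in\mathbb{Z}$, $x_1\ne x_2$, and $s$ a positive integer. Then $$h(P+Q)\le 3h(s)+\tfrac12\log X+3.9.$$
   Context: The model is obtained from a global minimal Weierstrass equation of $E$ by the substitution $x\mapsto \frac{1}{36}(x-3b_2)$, $y\mapsto \frac12(\frac{y}{108}-\frac{a_1}{36}(x-3b_2)-a_3)$. $h$ is the absolute logarithmic Weil height (so $h(s)=\log s$) and $h(P)=h(x(P))$. *)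

theory Defs
  imports Complex_Main
begin

text \<open>General Weierstrass equation y^2 + a1 xy + a3 y = x^3 + a2 x^2 + a4 x + a6,
  with the standard quantities b2, b4, b6, b8, c4, c6 and discriminant.\<close>

definition wb2 :: "int \<Rightarrow> int \<Rightarrow> int" where "wb2 a1 a2 = a1^2 + 4*a2"
definition wb4 :: "int \<Rightarrow> int \<Rightarrow> int \<Rightarrow> int" where "wb4 a1 a3 a4 = 2*a4 + a1*a3"
definition wb6 :: "int \<Rightarrow> int \<Rightarrow> int" where "wb6 a3 a6 = a3^2 + 4*a6"
definition wb8 :: "int \<Rightarrow> int \<Rightarrow> int \<Rightarrow> int \<Rightarrow> int \<Rightarrow> int" where
  "wb8 a1 a2 a3 a4 a6 = a1^2*a6 + 4*a2*a6 - a1*a3*a4 + a2*a3^2 - a4^2"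

definition wc4 :: "int \<Rightarrow> int \<Rightarrow> int \<Rightarrow> int \<Rightarrow> int \<Rightarrow> int" where
  "wc4 a1 a2 a3 a4 a6 = (wb2 a1 a2)^2 - 24 * wb4 a1 a3 a4"
definition wc6 :: "int \<Rightarrow> int \<Rightarrow> int \<Rightarrow> int \<Rightarrow> int \<Rightarrow> int" where
  "wc6 a1 a2 a3 a4 a6 = 36 * wb2 a1 a2 * wb4 a1 a3 a4 - (wb2 a1 a2)^3 - 216 * wb6 a3 a6"
definition wdisc :: "int \<Rightarrow> int \<Rightarrow> int \<Rightarrow> int \<Rightarrow> int \<Rightarrow> int" where
  "wdisc a1 a2 a3 a4 a6 = 0 - (wb2 a1 a2)^2 * wb8 a1 a2 a3 a4 a6 - 8 * (wb4 a1 a3 a4)^3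
     - 27 * (wb6 a3 a6)^2 + 9 * wb2 a1 a2 * wb4 a1 a3 a4 * wb6 a3 a6"

text \<open>Coefficients after the admissible change of variables
  x = u^2 x' + r, y = u^3 y' + s u^2 x' + t (u \<noteq> 0), over Q.\<close>

definition chg_coeffs ::
  "rat \<Rightarrow> rat \<Rightarrow> rat \<Rightarrow> rat \<Rightarrow> int \<Rightarrow> int \<Rightarrow> int \<Rightarrow> int \<Rightarrow> int \<Rightarrow> rat \<times> rat \<times> rat \<times> rat \<times> rat" where
  "chg_coeffs u r s t a1 a2 a3 a4 a6 =
     ((of_int a1 + 2*s) / u,
      (of_int a2 - s * of_int a1 + 3*r - s^2) / u^2,
      (of_int a3 + r * of_int a1 + 2*t) / u^3,
      (of_int a4 - s * of_int a3 + 2*r*of_int a2 - (t + r*s) * of_int a1 + 3*r^2 - 2*s*t) / u^4,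
      (of_int a6 + r * of_int a4 + r^2 * of_int a2 + r^3 - t * of_int a3 - t^2 - r*t*of_int a1) / u^6)"


text \<open>A global minimal Weierstrass equation: integral, nonsingular, and no admissible
  change of variables over Q yields an integral model of strictly smaller |discriminant|
  (the new discriminant is disc / u^12).\<close>

definition global_minimal :: "int \<Rightarrow> int \<Rightarrow> int \<Rightarrow> int \<Rightarrow> int \<Rightarrow> bool" where
  "global_minimal a1 a2 a3 a4 a6 \<longleftrightarrow>
     wdisc a1 a2 a3 a4 a6 \<noteq> 0 \<and>
     (\<forall>u r s t. u \<noteq> 0 \<longrightarrow>
        (case chg_coeffs u r s t a1 a2 a3 a4 a6 of (b1, b2, b3, b4, b6) \<Rightarrow>
           b1 \<in> \<int> \<and> b2 \<in> \<int> \<and> b3 \<in> \<int> \<and> b4 \<in> \<int> \<and> b6 \<in> \<int>) \<longrightarrow>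
        \<bar>of_int (wdisc a1 a2 a3 a4 a6)\<bar> \<le> \<bar>of_int (wdisc a1 a2 a3 a4 a6) / u^12\<bar>)"

text \<open>Points: None is the point at infinity O, Some (x,y) an affine point.\<close>

type_synonym qpoint = "(rat \<times> rat) option"

definition on_curve :: "int \<Rightarrow> int \<Rightarrow> qpoint \<Rightarrow> bool" where
  "on_curve A B p = (case p of None \<Rightarrow> True
      | Some (x, y) \<Rightarrow> y^2 = x^3 + of_int A * x + of_int B)"

definition ec_add :: "int \<Rightarrow> qpoint \<Rightarrow> qpoint \<Rightarrow> qpoint" where
  "ec_add A p q = (case p of None \<Rightarrow> q | Some (x1, y1) \<Rightarrow>
     (case q of None \<Rightarrow> p | Some (x2, y2) \<Rightarrow>
       (if x1 = x2 \<and> y1 = - y2 then None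
        else let l = (if x1 = x2 then (3 * x1^2 + of_int A) / (2 * y1)
                      else (y2 - y1) / (x2 - x1));
                 x3 = l^2 - x1 - x2
             in Some (x3, l * (x1 - x3) - y1))))"

definition rat_height :: "rat \<Rightarrow> real" where
  "rat_height q = (case quotient_of q of (a, b) \<Rightarrow> ln (real_of_int (max \<bar>a\<bar> \<bar>b\<bar>)))"

definition pt_height :: "qpoint \<Rightarrow> real" where
  "pt_height p = (case p of None \<Rightarrow> 0 | Some (x, y) \<Rightarrow> rat_height x)"

definition xcoord :: "qpoint \<Rightarrow> rat" where
  "xcoord p = fst (the p)"

end

theory Submission
  imports Defs
begin

(* For x(P) \<noteq> x(Q) the chord construction gives
     x(P+Q) (x(Q) - x(P))^2 = (x(P) x(Q) + A)(x(P) + x(Q)) + 2B - 2 y(P) y(Q).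
   With x(P) = x1/s and x(Q) = x2/s this writes x(P+Q) = N/D with D = s (x1 - x2)^2 and
   N = s^3 times the right-hand side; N is an integer because (s^3 y(P) y(Q))^2 is one.
   Put r = X^(1/6), so |A| <= r^2 and |B| <= r^3. Then |x| <= 2r forces y^2 <= 11 r^3, and
   both |N| and D are at most 44 s^3 r^3; since ln 44 < 3.9 the bound follows. Global
   minimality enters only through the nonvanishing discriminant, which gives X >= 1. *)

definition chord_numerator :: "int \<Rightarrow> int \<Rightarrow> 'a::comm_ring_1 \<Rightarrow> 'a \<Rightarrow> 'a \<Rightarrow> 'a \<Rightarrow> 'a" where
  "chord_numerator A B x1 y1 x2 y2 = (x1 * x2 + of_int A) * (x1 + x2) + 2 * of_int B - 2 * y1 * y2"

lemma wdisc_eq_wc4_wc6: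
  "1728 * wdisc a1 a2 a3 a4 a6 = wc4 a1 a2 a3 a4 a6 ^ 3 - wc6 a1 a2 a3 a4 a6 ^ 2"
  unfolding wdisc_def wc4_def wc6_def wb2_def wb4_def wb6_def wb8_def by algebra

lemma global_minimal_wc4_or_wc6_nonzero:
  assumes "global_minimal a1 a2 a3 a4 a6"
  shows "wc4 a1 a2 a3 a4 a6 \<noteq> 0 \<or> wc6 a1 a2 a3 a4 a6 \<noteq> 0"
  using assms wdisc_eq_wc4_wc6[of a1 a2 a3 a4 a6] by (auto simp: global_minimal_def)

lemma one_le_max_abs_power:
  assumes "A \<noteq> 0 \<or> B \<noteq> 0"
  shows "1 \<le> max (\<bar>real_of_int A\<bar> ^ 3) (\<bar>real_of_int B\<bar> ^ 2)"
proof -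
  have "1 \<le> \<bar>A\<bar> \<or> 1 \<le> \<bar>B\<bar>" using assms by auto
  then have "1 \<le> \<bar>real_of_int A\<bar> \<or> 1 \<le> \<bar>real_of_int B\<bar>" by linarith
  then show ?thesis by (metis one_le_power max.coboundedI1 max.coboundedI2)
qed

lemma abs_coeffs_le_powr:
  fixes X :: real
  assumes "X = max (\<bar>real_of_int A\<bar> ^ 3) (\<bar>real_of_int B\<bar> ^ 2)"
  shows "\<bar>real_of_int A\<bar> \<le> (X powr (1/6)) ^ 2" and "\<bar>real_of_int B\<bar> \<le> (X powr (1/6)) ^ 3"
proof -
  define r where "r = X powr (1/6)"
  have "X \<ge> 0" using assms by (simp add: le_max_iff_disj)
  then have "r ^ 6 = X" unfolding r_def by (cases "X = 0") (simp_all add: powr_power)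
  then have "\<bar>real_of_int A\<bar> ^ 3 \<le> (r ^ 2) ^ 3" and "\<bar>real_of_int B\<bar> ^ 2 \<le> (r ^ 3) ^ 2"
    using assms by (simp_all flip: power_mult)
  moreover have "r \<ge> 0" unfolding r_def by simp
  ultimately show "\<bar>real_of_int A\<bar> \<le> r ^ 2" and "\<bar>real_of_int B\<bar> \<le> r ^ 3"
    using power_mono_iff[of "\<bar>real_of_int A\<bar>" "r ^ 2" 3]
      power_mono_iff[of "\<bar>real_of_int B\<bar>" "r ^ 3" 2] by auto
qed

lemma rat_in_Ints_if_power_in_Ints:
  fixes q :: rat
  assumes "q ^ n \<in> \<int>" and "n > 0"
  shows "q \<in> \<int>"
proof -
  obtain a b where qo: "quotient_of q = (a, b)" by (cases "quotient_of q")
  have b_pos: "b > 0" and "coprime a b" and q_eq: "q = of_int a / of_int b"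
    using quotient_of_denom_pos[OF qo] quotient_of_coprime[OF qo] quotient_of_div[OF qo] by auto
  obtain m where "q ^ n = of_int m" using assms(1) by (auto elim: Ints_cases)
  then have "of_int (a ^ n) = (of_int (m * b ^ n) :: rat)"
    using b_pos unfolding q_eq by (simp add: field_simps power_divide)
  then have "b dvd a ^ n"
    using assms(2) by (metis dvd_mult dvd_power dvd_refl of_int_eq_iff)
  moreover have "coprime b (a ^ n)" using \<open>coprime a b\<close> by (simp add: coprime_commute)
  ultimately have "b = 1" using b_pos by (metis coprime_common_divisor dvd_refl zdvd1_eq abs_of_pos)
  then show ?thesis using q_eq by simp
qed

lemma rat_height_le_ln:
  fixes q :: rat and C :: real
  assumes "q * of_int D = of_int N" and "D > 0"
    and "\<bar>real_of_int N\<bar> \<le> C" and "real_of_int D \<le> C"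
  shows "rat_height q \<le> ln C"
proof -
  obtain a b where qo: "quotient_of q = (a, b)" by (cases "quotient_of q")
  have b_pos: "b > 0" and "coprime a b" and q_eq: "q = of_int a / of_int b"
    using quotient_of_denom_pos[OF qo] quotient_of_coprime[OF qo] quotient_of_div[OF qo] by auto
  have "of_int (a * D) = (of_int (N * b) :: rat)"
    using assms(1) b_pos unfolding q_eq by (simp add: field_simps)
  then have aD: "a * D = N * b" by (simp only: of_int_eq_iff)
  then have "b dvd D" using \<open>coprime a b\<close>
    by (metis coprime_commute coprime_dvd_mult_right_iff dvd_triv_right)
  then obtain k where k: "D = b * k" by blast
  have "k > 0" using k b_pos assms(2) by (simp add: zero_less_mult_iff)
  have "N = a * k" using aD k b_pos by (simp add: algebra_simps)
  then have "\<bar>a\<bar> \<le> \<bar>N\<bar>" and "b \<le> D"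
    using \<open>k > 0\<close> k b_pos by (simp_all add: abs_mult mult_le_cancel_left1)
  then have "real_of_int (max \<bar>a\<bar> b) \<le> C" using assms(3,4) by linarith
  then show ?thesis
    unfolding rat_height_def qo using b_pos by simp
qed

lemma ln_44_le: "ln 44 \<le> (3.9 :: real)"
proof -
  have "(1 + 0.39 + 0.39^2/2 :: real) ^ 10 \<le> exp 0.39 ^ 10"
    using exp_lower_Taylor_quadratic[of "0.39"] by (intro power_mono) simp_all
  also have "\<dots> = exp 3.9" by (simp flip: exp_of_nat_mult)
  finally have "(44::real) \<le> exp 3.9" by (simp add: eval_nat_numeral)
  then show ?thesis by (metis exp_gt_zero exp_ln_iff ln_le_cancel_iff ln_exp zero_less_numeral)
qed

lemma pt_height_ec_add_chord:
  assumes "on_curve A B (Some (x1, y1))" and "on_curve A B (Some (x2, y2))" and "x1 \<noteq> x2"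
  shows "pt_height (ec_add A (Some (x1, y1)) (Some (x2, y2)))
           = rat_height (chord_numerator A B x1 y1 x2 y2 / (x2 - x1) ^ 2)"
proof -
  define l where "l = (y2 - y1) / (x2 - x1)"
  have "l * (x2 - x1) = y2 - y1" unfolding l_def using assms(3) by simp
  then have "(l ^ 2 - x1 - x2) * (x2 - x1) ^ 2 = (y2 - y1) ^ 2 - (x1 + x2) * (x2 - x1) ^ 2"
    by algebra
  also have "\<dots> = chord_numerator A B x1 y1 x2 y2"
    using assms(1,2) unfolding on_curve_def chord_numerator_def by simp algebra
  finally have "l ^ 2 - x1 - x2 = chord_numerator A B x1 y1 x2 y2 / (x2 - x1) ^ 2"
    using assms(3) by (simp add: eq_divide_eq)
  then show ?thesis
    using assms(3) by (simp add: ec_add_def pt_height_def l_def Let_def)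
qed

lemma of_rat_chord_numerator:
  "(of_rat (chord_numerator A B x1 y1 x2 y2) :: 'a::field_char_0)
     = chord_numerator A B (of_rat x1) (of_rat y1) (of_rat x2) (of_rat y2)"
  by (simp add: chord_numerator_def of_rat_add of_rat_diff of_rat_mult)

lemma scaled_chord_numerator_in_Ints:
  fixes x1 x2 y1 y2 :: rat
  assumes "on_curve A B (Some (x1, y1))" and "on_curve A B (Some (x2, y2))"
    and "x1 = of_int n1 / of_int s" and "x2 = of_int n2 / of_int s" and "s \<noteq> 0"
  shows "of_int s ^ 3 * chord_numerator A B x1 y1 x2 y2 \<in> \<int>"
proof -
  have scaled_y_square: "of_int s ^ 3 * y ^ 2 = of_int (n ^ 3 + A * n * s ^ 2 + B * s ^ 3)"
    if "on_curve A B (Some (x, y))" and "x = of_int n / of_int s" for x y :: rat and n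
    using that assms(5) unfolding on_curve_def
    by (simp add: field_simps power3_eq_cube power2_eq_square)
  have "(of_int s ^ 3 * y1 * y2) ^ 2 = (of_int s ^ 3 * y1 ^ 2) * (of_int s ^ 3 * y2 ^ 2)"
    by algebra
  also have "\<dots> \<in> \<int>"
    using scaled_y_square[OF assms(1,3)] scaled_y_square[OF assms(2,4)] by simp
  finally have "of_int s ^ 3 * y1 * y2 \<in> \<int>" by (rule rat_in_Ints_if_power_in_Ints) simp
  moreover have "of_int s ^ 3 * chord_numerator A B x1 y1 x2 y2
      = of_int ((n1 * n2 + A * s ^ 2) * (n1 + n2) + 2 * B * s ^ 3) - 2 * (of_int s ^ 3 * y1 * y2)"
    using assms(5) unfolding assms(3,4) chord_numerator_def
    by (simp add: field_simps power3_eq_cube power2_eq_square)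
  ultimately show ?thesis by simp
qed

lemma curve_y_square_le:
  fixes u v r :: real
  assumes "v ^ 2 = u ^ 3 + of_int A * u + of_int B"
    and "\<bar>u\<bar> \<le> 2 * r" and "\<bar>of_int A\<bar> \<le> r ^ 2" and "\<bar>of_int B\<bar> \<le> r ^ 3"
  shows "v ^ 2 \<le> 11 * r ^ 3"
proof -
  have "\<bar>u ^ 3\<bar> \<le> (2 * r) ^ 3" unfolding power_abs by (rule power_mono) (use assms(2) in auto)
  moreover have "\<bar>of_int A * u\<bar> \<le> r ^ 2 * (2 * r)"
    unfolding abs_mult by (rule mult_mono) (use assms(2,3) in auto)
  ultimately have "v ^ 2 \<le> (2 * r) ^ 3 + r ^ 2 * (2 * r) + r ^ 3"
    using assms(1,4) by linarith
  then show ?thesis by (simp add: power3_eq_cube power2_eq_square)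
qed

lemma abs_chord_numerator_le:
  fixes u1 u2 v1 v2 r :: real
  assumes "v1 ^ 2 = u1 ^ 3 + of_int A * u1 + of_int B" and "v2 ^ 2 = u2 ^ 3 + of_int A * u2 + of_int B"
    and "\<bar>u1\<bar> \<le> 2 * r" and "\<bar>u2\<bar> \<le> 2 * r"
    and "\<bar>of_int A\<bar> \<le> r ^ 2" and "\<bar>of_int B\<bar> \<le> r ^ 3"
  shows "\<bar>chord_numerator A B u1 v1 u2 v2\<bar> \<le> 44 * r ^ 3"
proof -
  have "r \<ge> 0" using assms(3) by linarith
  have "(v1 * v2) ^ 2 \<le> (11 * r ^ 3) * (11 * r ^ 3)"
    unfolding power_mult_distrib
    using curve_y_square_le[OF assms(1,3,5,6)] curve_y_square_le[OF assms(2,4,5,6)] \<open>r \<ge> 0\<close>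
    by (intro mult_mono) auto
  then have v: "\<bar>v1 * v2\<bar> \<le> 11 * r ^ 3"
    using \<open>r \<ge> 0\<close> abs_le_square_iff[of "v1 * v2" "11 * r ^ 3"] by (simp add: power2_eq_square)
  have "\<bar>u1 * u2\<bar> \<le> (2 * r) * (2 * r)"
    unfolding abs_mult by (rule mult_mono) (use assms(3,4) in auto)
  then have "\<bar>u1 * u2 + of_int A\<bar> \<le> 5 * r ^ 2" using assms(5) by (simp add: power2_eq_square)
  moreover have "\<bar>u1 + u2\<bar> \<le> 4 * r" using assms(3,4) by linarith
  ultimately have "\<bar>(u1 * u2 + of_int A) * (u1 + u2)\<bar> \<le> (5 * r ^ 2) * (4 * r)"
    unfolding abs_mult by (intro mult_mono) auto
  also have "\<dots> = 20 * r ^ 3" by (simp add: power2_eq_square power3_eq_cube)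
  finally show ?thesis
    using v assms(6) unfolding chord_numerator_def mult.assoc[of 2 v1 v2] by linarith
qed

lemma on_curve_of_rat:
  assumes "on_curve A B (Some (x, y))"
  shows "(of_rat y :: 'a::field_char_0) ^ 2 = of_rat x ^ 3 + of_int A * of_rat x + of_int B"
proof -
  have "(of_rat (y ^ 2) :: 'a) = of_rat (x ^ 3 + of_int A * x + of_int B)"
    using assms by (simp add: on_curve_def)
  then show ?thesis by (simp add: of_rat_add of_rat_mult of_rat_power)
qed

lemma rat_height_chord_le:
  fixes x1 x2 y1 y2 :: rat and r :: real
  assumes "on_curve A B (Some (x1, y1))" and "on_curve A B (Some (x2, y2))"
    and "x1 = of_int n1 / of_int s" and "x2 = of_int n2 / of_int s" and "s > 0" and "n1 \<noteq> n2"
    and "\<bar>real_of_rat x1\<bar> \<le> 2 * r" and "\<bar>real_of_rat x2\<bar> \<le> 2 * r"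
    and "\<bar>real_of_int A\<bar> \<le> r ^ 2" and "\<bar>real_of_int B\<bar> \<le> r ^ 3" and "1 \<le> r"
  shows "rat_height (chord_numerator A B x1 y1 x2 y2 / (x2 - x1) ^ 2)
           \<le> ln (44 * real_of_int s ^ 3 * r ^ 3)"
proof -
  obtain N where N: "of_int N = of_int s ^ 3 * chord_numerator A B x1 y1 x2 y2"
    using scaled_chord_numerator_in_Ints[OF assms(1-4)] assms(5) by (metis Ints_cases less_irrefl)
  define D where "D = s * (n2 - n1) ^ 2"
  have "D > 0" using assms(5,6) by (simp add: D_def)
  have D: "of_int D = of_int s ^ 3 * (x2 - x1) ^ 2"
    unfolding D_def assms(3,4) using assms(5) by (simp add: field_simps power2_eq_square power3_eq_cube)
  have "x1 \<noteq> x2" using assms(3-6) by (simp add: divide_cancel_right)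
  then have "chord_numerator A B x1 y1 x2 y2 / (x2 - x1) ^ 2 * of_int D = of_int N"
    unfolding D N by simp
  moreover have "\<bar>real_of_int N\<bar> \<le> 44 * real_of_int s ^ 3 * r ^ 3"
  proof -
    have "real_of_int N = real_of_int s ^ 3 * chord_numerator A B
        (real_of_rat x1) (real_of_rat y1) (real_of_rat x2) (real_of_rat y2)"
      using arg_cong[OF N, of real_of_rat] by (simp add: of_rat_mult of_rat_power of_rat_chord_numerator)
    then show ?thesis
      using abs_chord_numerator_le[OF on_curve_of_rat[OF assms(1)] on_curve_of_rat[OF assms(2)] assms(7-10)]
        assms(5) by (simp add: abs_mult)
  qed
  moreover have "real_of_int D \<le> 44 * real_of_int s ^ 3 * r ^ 3"
  proof -
    have "real_of_int D = real_of_int s ^ 3 * (real_of_rat x2 - real_of_rat x1) ^ 2"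
      using arg_cong[OF D, of real_of_rat] by (simp add: of_rat_mult of_rat_power of_rat_diff)
    moreover have "(real_of_rat x2 - real_of_rat x1) ^ 2 \<le> (4 * r) ^ 2"
      using assms(7,8,11) by (intro power2_le_iff_abs_le[THEN iffD2]) linarith+
    moreover have "(4 * r) ^ 2 \<le> 44 * r ^ 3"
      using assms(11) by (simp add: power2_eq_square power3_eq_cube)
    ultimately show ?thesis using assms(5) by simp
  qed
  ultimately show ?thesis by (rule rat_height_le_ln[OF _ \<open>D > 0\<close>])
qed

theorem lemma3p7:
  fixes a1 a2 a3 a4 a6 A B :: int and P Q :: qpoint and x1 x2 s :: int and X :: real
  assumes "global_minimal a1 a2 a3 a4 a6"
    and "A = -27 * wc4 a1 a2 a3 a4 a6"
    and "B = -54 * wc6 a1 a2 a3 a4 a6"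
    and "X = max (\<bar>real_of_int A\<bar>^3) (\<bar>real_of_int B\<bar>^2)"
    and "on_curve A B P" and "on_curve A B Q"
    and "P \<noteq> None" and "Q \<noteq> None"
    and "\<bar>real_of_rat (xcoord P)\<bar> \<le> 2 * X powr (1/6)"
    and "\<bar>real_of_rat (xcoord Q)\<bar> \<le> 2 * X powr (1/6)"
    and "s > 0"
    and "xcoord P = of_int x1 / of_int s"
    and "xcoord Q = of_int x2 / of_int s"
    and "x1 \<noteq> x2"
  shows "pt_height (ec_add A P Q) \<le> 3 * ln (real_of_int s) + ln X / 2 + 3.9"
proof -
  obtain xP yP xQ yQ where P: "P = Some (xP, yP)" and Q: "Q = Some (xQ, yQ)"
    using assms(7,8) by auto
  have "A \<noteq> 0 \<or> B \<noteq> 0"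
    using global_minimal_wc4_or_wc6_nonzero[OF assms(1)] assms(2,3) by auto
  then have "X \<ge> 1" using one_le_max_abs_power assms(4) by blast
  define r where "r = X powr (1/6)"
  have "r \<ge> 1" using \<open>X \<ge> 1\<close> unfolding r_def by (simp add: ge_one_powr_ge_zero)
  have "xP \<noteq> xQ" using assms(11-14) P Q by (simp add: xcoord_def divide_cancel_right)
  then have "pt_height (ec_add A P Q) = rat_height (chord_numerator A B xP yP xQ yQ / (xQ - xP) ^ 2)"
    using assms(5,6) unfolding P Q by (rule pt_height_ec_add_chord[rotated 2])
  also have "\<dots> \<le> ln (44 * real_of_int s ^ 3 * r ^ 3)"
    using assms(5,6,9-14) abs_coeffs_le_powr[OF assms(4)] \<open>r \<ge> 1\<close>
    unfolding P Q r_def xcoord_def by (intro rat_height_chord_le) auto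
  also have "\<dots> = ln 44 + 3 * ln (real_of_int s) + ln X / 2"
    using assms(11) \<open>X \<ge> 1\<close> \<open>r \<ge> 1\<close> unfolding r_def by (simp add: ln_mult ln_realpow ln_powr)
  finally show ?thesis using ln_44_le by linarith
qed

end
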